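(* Let $(p_n)$ be a sequence in $(0,1)$ such that $\alpha=\lim_{n\to\infty}p_n\log n$ exists with $0<\alpha<\infty$, and let $\gamma>0$. For the torn-paper channel with block length $n$ and tearing probability $p_n$, define the coverage $$c_\gamma=\frac1n\sum_{i=1}^K N_i\,\mathbf 1\{N_i\ge\gamma\log n\}.$$ Then for any $\epsilon>0$, $$\lim_{n\to\infty}\Pr\left(\left|c_\gamma-(\alpha\gamma+1)e^{-\alpha\gamma}\right|>\epsilon\right)=0.$$
   Context: Logarithms are base 2. The torn-paper channel with block length $n$ and tearing probability $p_n$: $N_1,N_2,\dots$ are i.i.d. $\mathrm{Geometric}(p_n)$ random variables (support $\{1,2,\dots\}$, mean $1/p_n$), $K$ is the smallest index with $\sum_{i=1}^K N_i\ge n$, and the input $X^n$ is cut into consecutive fragments of lengths $N_1,\dots,N_{K-1}$ and a final fragment ending at position $n$; the fragments are output in uniformly random order. *)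

theory Defs
  imports "HOL-Probability.Probability"
begin

text \<open>Torn-paper channel, block length n. Fragment lengths are indexed from 0:
  N 0, N 1, ... (paper: N_1, N_2, ...). K is the number of fragments, i.e. the
  least k with N 0 + ... + N (k-1) >= n.\<close>

definition tp_K :: "nat \<Rightarrow> (nat \<Rightarrow> nat) \<Rightarrow> nat" where
  "tp_K n Ns = (LEAST k. (\<Sum>i<k. Ns i) \<ge> n)"

definition tp_coverage :: "real \<Rightarrow> nat \<Rightarrow> (nat \<Rightarrow> nat) \<Rightarrow> real" where
  "tp_coverage \<gamma> n Ns =
     (\<Sum>i<tp_K n Ns. if real (Ns i) \<ge> \<gamma> * log 2 (real n) then real (Ns i) else 0) / real n"

end

(*
  With T = ceil(gamma log n) the coverage is (1/n) sum_{i<K} N_i 1{N_i >= T}.  For small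
  delta > 0 put m1 = (1 - delta) n p and m2 = (1 + delta) n p.  By Chebyshev the partial sums
  N_0 + ... + N_(m-1) concentrate around m/p, so with high probability m1 <= K <= m2 and the
  coverage is sandwiched between the truncated sums up to m1 and up to m2.  These concentrate
  around m E[N 1{N >= T}] = m (1 - p)^(T-1) (T - 1 + 1/p), so the coverage is within about
  delta of p E[N 1{N >= T}] = (1 - p)^(T-1) (p (T - 1) + 1), which tends to
  (alpha gamma + 1) exp(-alpha gamma) because p -> 0 and p (T - 1) -> alpha gamma.
  All error probabilities are O(1/(n p)), and n p -> infinity.
*)
theory Submission
  imports Defs "HOL-Real_Asymp.Real_Asymp"
begin

abbreviation shifted_geometric_pmf :: "real \<Rightarrow> nat pmf" where
  "shifted_geometric_pmf p \<equiv> map_pmf Suc (geometric_pmf p)"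

definition above_threshold :: "nat \<Rightarrow> nat \<Rightarrow> real" where
  "above_threshold T k = (if T \<le> k then real k else 0)"

definition coverage_threshold :: "real \<Rightarrow> nat \<Rightarrow> nat" where
  "coverage_threshold \<gamma> n = nat \<lceil>\<gamma> * log 2 (real n)\<rceil>"

section \<open>Second-moment bound for i.i.d. sums\<close>

context prob_space
begin

lemma iid_centered_product_moment:
  fixes X :: "nat \<Rightarrow> 'a \<Rightarrow> 'b" and g :: "'b \<Rightarrow> real"
  assumes indep: "indep_vars (\<lambda>_. S) X UNIV"
    and distr: "\<And>i. distr M S (X i) = P"
    and g: "g \<in> borel_measurable S"
    and int2: "integrable P (\<lambda>x. (g x)\<^sup>2)"
    and s: "(\<integral>x. (g x)\<^sup>2 \<partial>P) \<le> s"
  defines "Y \<equiv> \<lambda>i \<omega>. g (X i \<omega>) - (\<integral>x. g x \<partial>P)"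
  shows "integrable M (\<lambda>\<omega>. Y i \<omega> * Y j \<omega>)"
    and "expectation (\<lambda>\<omega>. Y i \<omega> * Y j \<omega>) \<le> (if i = j then s else 0)"
proof -
  have X[measurable]: "X i \<in> M \<rightarrow>\<^sub>M S" for i
    using indep unfolding indep_vars_def by blast
  note g[measurable]
  have int_g2: "integrable M (\<lambda>\<omega>. (g (X i \<omega>))\<^sup>2)" for i
    using int2 distr[of i] integrable_distr_eq[OF X[of i], of "\<lambda>x. (g x)\<^sup>2"] by simp
  have int_g: "integrable M (\<lambda>\<omega>. g (X i \<omega>))" for i
    by (rule square_integrable_imp_integrable[OF _ int_g2]) simp
  have E_g: "expectation (\<lambda>\<omega>. g (X i \<omega>)) = (\<integral>x. g x \<partial>P)" for i
    using integral_distr[OF X[of i] g] distr[of i] by simp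
  have int_Y: "integrable M (Y i)" for i
    using int_g by (simp add: Y_def)
  have "integrable M (\<lambda>\<omega>. Y i \<omega> * Y j \<omega>) \<and> expectation (\<lambda>\<omega>. Y i \<omega> * Y j \<omega>) \<le> (if i = j then s else 0)"
  proof (cases "i = j")
    case True
    define \<mu> where "\<mu> = (\<integral>x. g x \<partial>P)"
    have square: "Y i \<omega> * Y i \<omega> = (g (X i \<omega>))\<^sup>2 - 2 * \<mu> * g (X i \<omega>) + \<mu>\<^sup>2" for \<omega>
      by (simp add: Y_def \<mu>_def power2_eq_square algebra_simps)
    have "integrable M (\<lambda>\<omega>. Y i \<omega> * Y i \<omega>)"
      unfolding square using int_g int_g2 by simp
    moreover have "expectation (\<lambda>\<omega>. Y i \<omega> * Y i \<omega>) \<le> expectation (\<lambda>\<omega>. (g (X i \<omega>))\<^sup>2)"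
      unfolding square using int_g int_g2 E_g by (simp add: \<mu>_def prob_space power2_eq_square)
    moreover have "expectation (\<lambda>\<omega>. (g (X i \<omega>))\<^sup>2) \<le> s"
      using integral_distr[OF X[of i], of "\<lambda>x. (g x)\<^sup>2"] distr[of i] s by simp
    ultimately show ?thesis
      using True by auto
  next
    case False
    have "indep_vars (\<lambda>_. borel) Y {i, j}"
      unfolding Y_def by (rule indep_vars_compose2[OF indep_vars_subset[OF indep]]) auto
    then have "integrable M (\<lambda>\<omega>. \<Prod>l\<in>{i, j}. Y l \<omega>)"
      and "expectation (\<lambda>\<omega>. \<Prod>l\<in>{i, j}. Y l \<omega>) = (\<Prod>l\<in>{i, j}. expectation (Y l))"
      by (auto intro: indep_vars_integrable indep_vars_lebesgue_integral int_Y)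
    moreover have "expectation (Y i) = 0"
      using int_g E_g by (simp add: Y_def prob_space)
    ultimately show ?thesis using False by simp
  qed
  then show "integrable M (\<lambda>\<omega>. Y i \<omega> * Y j \<omega>)"
    and "expectation (\<lambda>\<omega>. Y i \<omega> * Y j \<omega>) \<le> (if i = j then s else 0)"
    by auto
qed

lemma iid_sum_deviation_prob_le:
  fixes X :: "nat \<Rightarrow> 'a \<Rightarrow> 'b" and g :: "'b \<Rightarrow> real"
  assumes indep: "indep_vars (\<lambda>_. S) X UNIV"
    and distr: "\<And>i. distr M S (X i) = P"
    and g: "g \<in> borel_measurable S"
    and int2: "integrable P (\<lambda>x. (g x)\<^sup>2)"
    and s: "(\<integral>x. (g x)\<^sup>2 \<partial>P) \<le> s"
    and a: "0 < a"
  shows "prob {\<omega> \<in> space M. a \<le> \<bar>(\<Sum>i<m. g (X i \<omega>)) - real m * (\<integral>x. g x \<partial>P)\<bar>}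
           \<le> real m * s / a\<^sup>2"
proof -
  define Y where "Y i \<omega> = g (X i \<omega>) - (\<integral>x. g x \<partial>P)" for i \<omega>
  note moments = iid_centered_product_moment[OF indep distr g int2 s, folded Y_def]
  define Z where "Z \<omega> = (\<Sum>i<m. Y i \<omega>)" for \<omega>
  have Z_eq: "Z \<omega> = (\<Sum>i<m. g (X i \<omega>)) - real m * (\<integral>x. g x \<partial>P)" for \<omega>
    by (simp add: Z_def Y_def sum_subtractf)
  have Z_square: "(Z \<omega>)\<^sup>2 = (\<Sum>i<m. \<Sum>j<m. Y i \<omega> * Y j \<omega>)" for \<omega>
    unfolding Z_def power2_eq_square sum_product ..
  have int_Z2: "integrable M (\<lambda>\<omega>. (Z \<omega>)\<^sup>2)"
    unfolding Z_square using moments(1) by simp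
  have "expectation (\<lambda>\<omega>. (Z \<omega>)\<^sup>2) = (\<Sum>i<m. \<Sum>j<m. expectation (\<lambda>\<omega>. Y i \<omega> * Y j \<omega>))"
    unfolding Z_square using moments(1) by (simp add: Bochner_Integration.integral_sum)
  also have "\<dots> \<le> (\<Sum>i<m. \<Sum>j<m. if i = j then s else 0)"
    by (intro sum_mono moments(2))
  finally have E_Z2: "expectation (\<lambda>\<omega>. (Z \<omega>)\<^sup>2) \<le> real m * s"
    by simp
  have "prob {\<omega> \<in> space M. a \<le> \<bar>(\<Sum>i<m. g (X i \<omega>)) - real m * (\<integral>x. g x \<partial>P)\<bar>}
      = prob {\<omega> \<in> space M. a\<^sup>2 \<le> (Z \<omega>)\<^sup>2}"
    using a abs_le_square_iff[of a] by (auto simp: Z_eq intro!: arg_cong[where f=prob])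
  also have "\<dots> \<le> expectation (\<lambda>\<omega>. (Z \<omega>)\<^sup>2) / a\<^sup>2"
    by (rule integral_Markov_inequality_measure[where A="space M"])
       (use a int_Z2 in auto)
  also have "\<dots> \<le> real m * s / a\<^sup>2"
    using E_Z2 by (simp add: divide_right_mono)
  finally show ?thesis .
qed

end

section \<open>Moments of the shifted geometric distribution\<close>

lemma above_threshold_0 [simp]: "above_threshold 0 = real"
  by (simp add: above_threshold_def fun_eq_iff)

lemma above_threshold_Suc_0 [simp]: "above_threshold (Suc 0) = real"
  by (simp add: above_threshold_def fun_eq_iff)

lemma above_threshold_nonneg: "0 \<le> above_threshold T k"
  by (simp add: above_threshold_def)

lemma above_threshold_le: "above_threshold T k \<le> real k"
  by (simp add: above_threshold_def)

lemma sums_Suc_mult_Suc_Suc_power: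
  fixes z :: real
  assumes "norm z < 1"
  shows "(\<lambda>n. real (Suc n) * real (Suc (Suc n)) * z ^ n) sums (2 / (1 - z) ^ 3)"
proof -
  have "(\<lambda>n. diffs (\<lambda>n. real (Suc n)) n * z ^ n) sums (2 / (1 - z) ^ 3)"
  proof (rule termdiffs_sums_strong[where K = 1 and f = "\<lambda>z. 1 / (1 - z)\<^sup>2"])
    show "(\<lambda>n. real (Suc n) * w ^ n) sums (1 / (1 - w)\<^sup>2)" if "norm w < 1" for w :: real
      using that by (rule geometric_deriv_sums)
  next
    have "1 - z \<noteq> 0"
      using assms by auto
    then have "((\<lambda>z. 1 / (1 - z)\<^sup>2) has_field_derivative
                 - (of_nat 2 * (1 - z) ^ 1 * (0 - 1)) / ((1 - z)\<^sup>2 * (1 - z)\<^sup>2)) (at z)"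
      by (intro derivative_eq_intros) auto
    moreover have "- (of_nat 2 * w ^ 1 * (0 - 1)) / (w\<^sup>2 * w\<^sup>2) = 2 / w ^ 3" if "w \<noteq> 0" for w :: real
      using that by (simp add: field_simps power2_eq_square power3_eq_cube)
    ultimately show "((\<lambda>z. 1 / (1 - z)\<^sup>2) has_field_derivative 2 / (1 - z) ^ 3) (at z)"
      using \<open>1 - z \<noteq> 0\<close> by metis
  qed (use assms in auto)
  then show ?thesis
    by (simp add: diffs_def mult_ac)
qed

lemma geometric_pmf_expectation_sums:
  fixes h :: "nat \<Rightarrow> real"
  assumes p: "0 < p" "p \<le> 1"
    and h_sums: "(\<lambda>k. h k * ((1 - p) ^ k * p)) sums s"
    and h_nonneg: "\<And>k. 0 \<le> h k"
  shows "integrable (geometric_pmf p) h"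
    and "measure_pmf.expectation (geometric_pmf p) h = s"
proof -
  have pmf_h: "(\<lambda>k. pmf (geometric_pmf p) k * h k) = (\<lambda>k. h k * ((1 - p) ^ k * p))"
    using p by (auto simp: mult_ac)
  have "integrable (count_space UNIV) (\<lambda>k. pmf (geometric_pmf p) k * h k)"
    unfolding pmf_h integrable_count_space_nat_iff
    using h_sums p h_nonneg by (simp add: sums_iff)
  then show "integrable (geometric_pmf p) h"
    and "measure_pmf.expectation (geometric_pmf p) h = s"
    unfolding measure_pmf_eq_density using h_sums
    by (simp_all add: integrable_density integral_density integral_count_space_nat pmf_h sums_iff)
qed

lemma shifted_geometric_second_moment:
  assumes p: "0 < p" "p \<le> 1"
  shows "integrable (shifted_geometric_pmf p) (\<lambda>k. (above_threshold T k)\<^sup>2)"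
    and "measure_pmf.expectation (shifted_geometric_pmf p) (\<lambda>k. (above_threshold T k)\<^sup>2) \<le> 2 / p\<^sup>2"
proof -
  define h where "h k = real (Suc k) * real (Suc (Suc k))" for k
  have "(\<lambda>k. p * (real (Suc k) * real (Suc (Suc k)) * (1 - p) ^ k)) sums (p * (2 / (1 - (1 - p)) ^ 3))"
    by (intro sums_mult sums_Suc_mult_Suc_Suc_power) (use p in auto)
  moreover have "p * (2 / (1 - (1 - p)) ^ 3) = 2 / p\<^sup>2"
    using p by (simp add: field_simps power2_eq_square power3_eq_cube)
  ultimately have "(\<lambda>k. h k * ((1 - p) ^ k * p)) sums (2 / p\<^sup>2)"
    by (simp add: h_def mult_ac)
  then have h_int: "integrable (geometric_pmf p) h"
    and h_expectation: "measure_pmf.expectation (geometric_pmf p) h = 2 / p\<^sup>2"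
    using geometric_pmf_expectation_sums[OF p] by (auto simp: h_def)
  have bound: "(above_threshold T (Suc k))\<^sup>2 \<le> h k" for k
    using above_threshold_nonneg[of T "Suc k"] above_threshold_le[of T "Suc k"]
    by (simp add: h_def power2_eq_square mult_mono)
  have "integrable (geometric_pmf p) (\<lambda>k. (above_threshold T (Suc k))\<^sup>2)"
    by (rule Bochner_Integration.integrable_bound[OF h_int]) (use bound in \<open>auto simp: h_def\<close>)
  moreover have "measure_pmf.expectation (geometric_pmf p) (\<lambda>k. (above_threshold T (Suc k))\<^sup>2) \<le> 2 / p\<^sup>2"
    unfolding h_expectation[symmetric] by (intro integral_mono calculation h_int bound)
  ultimately show "integrable (shifted_geometric_pmf p) (\<lambda>k. (above_threshold T k)\<^sup>2)"
    and "measure_pmf.expectation (shifted_geometric_pmf p) (\<lambda>k. (above_threshold T k)\<^sup>2) \<le> 2 / p\<^sup>2"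
    by simp_all
qed

lemma shifted_geometric_above_threshold_expectation:
  assumes p: "0 < p" "p \<le> 1"
  shows "integrable (shifted_geometric_pmf p) (above_threshold (Suc t))"
    and "measure_pmf.expectation (shifted_geometric_pmf p) (above_threshold (Suc t))
           = (1 - p) ^ t * (real t + 1 / p)"
proof -
  define q where "q = 1 - p"
  have q: "0 \<le> q" "q < 1"
    using p by (auto simp: q_def)
  define F where "F k = above_threshold (Suc t) (Suc k) * (q ^ k * p)" for k
  have "(\<lambda>i. q ^ t * (real (Suc t) * (q ^ i * p) + p * (q ^ i * real i))) sums
          (q ^ t * (real (Suc t) * (1 / (1 - q) * p) + p * (q / (1 - q)\<^sup>2)))"
    using q by (intro sums_mult sums_add sums_mult2 geometric_sums geometric_sums_times_n) auto
  moreover have "real (Suc t) * (1 / (1 - q) * p) + p * (q / (1 - q)\<^sup>2) = real t + 1 / p"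
    using p by (simp add: q_def field_simps power2_eq_square)
  moreover have "F (i + t) = q ^ t * (real (Suc t) * (q ^ i * p) + p * (q ^ i * real i))" for i
    by (simp add: F_def above_threshold_def power_add algebra_simps)
  ultimately have "(\<lambda>i. F (i + t)) sums (q ^ t * (real t + 1 / p))"
    by (simp only:)
  moreover have "(\<Sum>i<t. F i) = 0"
    by (simp add: F_def above_threshold_def)
  ultimately have "F sums (q ^ t * (real t + 1 / p))"
    by (simp add: sums_iff_shift)
  from geometric_pmf_expectation_sums[OF p this[unfolded F_def q_def]]
  show "integrable (shifted_geometric_pmf p) (above_threshold (Suc t))"
    and "measure_pmf.expectation (shifted_geometric_pmf p) (above_threshold (Suc t))
           = (1 - p) ^ t * (real t + 1 / p)"
    by (simp_all add: above_threshold_nonneg q_def comp_def)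
qed

section \<open>Coverage between truncated partial sums\<close>

lemma tp_K_between:
  assumes "(\<Sum>i<m1. Ns i) < n" and "n \<le> (\<Sum>i<m2. Ns i)"
  shows "m1 < tp_K n Ns" and "tp_K n Ns \<le> m2"
proof -
  show "tp_K n Ns \<le> m2"
    unfolding tp_K_def by (rule Least_le) (rule assms(2))
  have "n \<le> (\<Sum>i<tp_K n Ns. Ns i)"
    unfolding tp_K_def by (rule LeastI) (rule assms(2))
  show "m1 < tp_K n Ns"
  proof (rule ccontr)
    assume "\<not> m1 < tp_K n Ns"
    then have "(\<Sum>i<tp_K n Ns. Ns i) \<le> (\<Sum>i<m1. Ns i)"
      by (intro sum_mono2) auto
    with assms(1) \<open>n \<le> (\<Sum>i<tp_K n Ns. Ns i)\<close> show False
      by linarith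
  qed
qed

lemma tp_coverage_eq_sum_above_threshold:
  "tp_coverage \<gamma> n Ns = (\<Sum>i<tp_K n Ns. above_threshold (coverage_threshold \<gamma> n) (Ns i)) / real n"
proof -
  have "(\<gamma> * log 2 (real n) \<le> real k) = (coverage_threshold \<gamma> n \<le> k)" for k
    by (simp add: coverage_threshold_def nat_le_iff ceiling_le_iff)
  then show ?thesis
    by (simp add: tp_coverage_def above_threshold_def)
qed

lemma tp_coverage_between:
  fixes \<gamma> :: real
  assumes "(\<Sum>i<m1. Ns i) < n" and "n \<le> (\<Sum>i<m2. Ns i)"
  defines "T \<equiv> coverage_threshold \<gamma> n"
  shows "(\<Sum>i<m1. above_threshold T (Ns i)) \<le> real n * tp_coverage \<gamma> n Ns"
    and "real n * tp_coverage \<gamma> n Ns \<le> (\<Sum>i<m2. above_threshold T (Ns i))"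
proof -
  have "0 < n"
    using assms(1) by linarith
  then have coverage: "real n * tp_coverage \<gamma> n Ns = (\<Sum>i<tp_K n Ns. above_threshold T (Ns i))"
    by (simp add: tp_coverage_eq_sum_above_threshold T_def)
  show "(\<Sum>i<m1. above_threshold T (Ns i)) \<le> real n * tp_coverage \<gamma> n Ns"
    unfolding coverage using tp_K_between(1)[OF assms(1,2)]
    by (intro sum_mono2) (auto simp: above_threshold_nonneg)
  show "real n * tp_coverage \<gamma> n Ns \<le> (\<Sum>i<m2. above_threshold T (Ns i))"
    unfolding coverage using tp_K_between(2)[OF assms(1,2)]
    by (intro sum_mono2) (auto simp: above_threshold_nonneg)
qed

lemma tp_coverage_close:
  fixes Ns :: "nat \<Rightarrow> nat" and n m1 m2 :: nat and \<gamma> \<nu> \<mu> c \<epsilon> \<delta> :: real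
  defines "T \<equiv> coverage_threshold \<gamma> n"
  assumes m1: "real m1 * \<nu> \<le> (1 - \<delta>) * real n" and m2: "(1 + \<delta>) * real n \<le> real m2 * \<nu>"
    and lower: "c - \<epsilon> / 2 \<le> real m1 * \<mu> / real n" and upper: "real m2 * \<mu> / real n \<le> c + \<epsilon> / 2"
    and length1: "\<bar>(\<Sum>i<m1. real (Ns i)) - real m1 * \<nu>\<bar> < \<delta> * real n"
    and length2: "\<bar>(\<Sum>i<m2. real (Ns i)) - real m2 * \<nu>\<bar> < \<delta> * real n"
    and cover1: "\<bar>(\<Sum>i<m1. above_threshold T (Ns i)) - real m1 * \<mu>\<bar> < \<epsilon> * real n / 2"
    and cover2: "\<bar>(\<Sum>i<m2. above_threshold T (Ns i)) - real m2 * \<mu>\<bar> < \<epsilon> * real n / 2"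
  shows "\<bar>tp_coverage \<gamma> n Ns - c\<bar> \<le> \<epsilon>"
proof -
  have "real (\<Sum>i<m1. Ns i) < real n"
    using m1 length1 by (simp add: abs_less_iff algebra_simps)
  moreover have "real n \<le> real (\<Sum>i<m2. Ns i)"
    using m2 length2 by (simp add: abs_less_iff algebra_simps)
  ultimately have sums: "(\<Sum>i<m1. Ns i) < n" "n \<le> (\<Sum>i<m2. Ns i)"
    by (simp_all only: of_nat_less_iff of_nat_le_iff)
  have n: "0 < real n"
    using sums(1) by simp
  have "c * real n - \<epsilon> * real n / 2 \<le> real m1 * \<mu>" "real m2 * \<mu> \<le> c * real n + \<epsilon> * real n / 2"
    using lower upper n by (simp_all add: field_simps)
  then have "(c - \<epsilon>) * real n \<le> tp_coverage \<gamma> n Ns * real n"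
    and "tp_coverage \<gamma> n Ns * real n \<le> (c + \<epsilon>) * real n"
    using tp_coverage_between[OF sums, of \<gamma>] cover1[unfolded abs_less_iff] cover2[unfolded abs_less_iff]
    unfolding T_def left_diff_distrib distrib_right by (simp_all add: mult.commute)
  then show ?thesis
    using n by (simp add: abs_le_iff)
qed

lemma (in prob_space) tp_coverage_deviation_prob_le:
  fixes X :: "nat \<Rightarrow> 'a \<Rightarrow> nat" and n m1 m2 :: nat and p \<gamma> \<delta> \<epsilon> c :: real
  assumes indep: "indep_vars (\<lambda>_. count_space UNIV) X UNIV"
    and distr: "\<And>i. distr M (count_space UNIV) (X i) = shifted_geometric_pmf p"
    and p: "0 < p" "p \<le> 1" and n: "0 < n" and \<delta>: "0 < \<delta>" and \<epsilon>: "0 < \<epsilon>"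
    and m1: "real m1 \<le> (1 - \<delta>) * (real n * p)" and m2: "(1 + \<delta>) * (real n * p) \<le> real m2"
  defines "\<mu> \<equiv> measure_pmf.expectation (shifted_geometric_pmf p) (above_threshold (coverage_threshold \<gamma> n))"
  assumes lower: "c - \<epsilon> / 2 \<le> real m1 * \<mu> / real n" and upper: "real m2 * \<mu> / real n \<le> c + \<epsilon> / 2"
  shows "prob {\<omega> \<in> space M. \<epsilon> < \<bar>tp_coverage \<gamma> n (\<lambda>i. X i \<omega>) - c\<bar>}
           \<le> (real m1 + real m2) / (real n * p)\<^sup>2 * (2 / \<delta>\<^sup>2 + 8 / \<epsilon>\<^sup>2)"
proof -
  define T where "T = coverage_threshold \<gamma> n"
  have X[measurable]: "X i \<in> M \<rightarrow>\<^sub>M count_space UNIV" for i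
    using indep unfolding indep_vars_def by blast
  have mean: "measure_pmf.expectation (shifted_geometric_pmf p) real = 1 / p"
    using shifted_geometric_above_threshold_expectation(2)[OF p, of 0] by simp
  define length_event where "length_event m =
    {\<omega> \<in> space M. \<delta> * real n \<le> \<bar>(\<Sum>i<m. real (X i \<omega>)) - real m * (1 / p)\<bar>}" for m
  define cover_event where "cover_event m =
    {\<omega> \<in> space M. \<epsilon> * real n / 2 \<le> \<bar>(\<Sum>i<m. above_threshold T (X i \<omega>)) - real m * \<mu>\<bar>}" for m
  have events[measurable]: "length_event m \<in> events" "cover_event m \<in> events" for m
    unfolding length_event_def cover_event_def by measurable
  have real_moment: "integrable (shifted_geometric_pmf p) (\<lambda>k. (real k)\<^sup>2)"
    "measure_pmf.expectation (shifted_geometric_pmf p) (\<lambda>k. (real k)\<^sup>2) \<le> 2 / p\<^sup>2"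
    using shifted_geometric_second_moment[OF p, of 0] by (simp_all only: above_threshold_0)
  have "prob {\<omega> \<in> space M. \<delta> * real n \<le>
          \<bar>(\<Sum>i<m. real (X i \<omega>)) - real m * measure_pmf.expectation (shifted_geometric_pmf p) real\<bar>}
        \<le> real m * (2 / p\<^sup>2) / (\<delta> * real n)\<^sup>2" for m
    by (rule iid_sum_deviation_prob_le[OF indep distr _ real_moment]) (use \<delta> n in auto)
  then have length_prob: "prob (length_event m) \<le> real m * (2 / p\<^sup>2) / (\<delta> * real n)\<^sup>2" for m
    by (simp only: length_event_def mean)
  have cover_prob: "prob (cover_event m) \<le> real m * (2 / p\<^sup>2) / (\<epsilon> * real n / 2)\<^sup>2" for m
    unfolding cover_event_def \<mu>_def T_def
    by (rule iid_sum_deviation_prob_le[OF indep distr _ shifted_geometric_second_moment[OF p]])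
       (use \<epsilon> n in auto)
  have m1': "real m1 * (1 / p) \<le> (1 - \<delta>) * real n" and m2': "(1 + \<delta>) * real n \<le> real m2 * (1 / p)"
    using m1 m2 p by (simp_all add: field_simps)
  have "{\<omega> \<in> space M. \<epsilon> < \<bar>tp_coverage \<gamma> n (\<lambda>i. X i \<omega>) - c\<bar>} \<subseteq>
          length_event m1 \<union> length_event m2 \<union> cover_event m1 \<union> cover_event m2"
    using tp_coverage_close[OF m1' m2' lower[unfolded \<mu>_def] upper[unfolded \<mu>_def]]
    by (force simp: length_event_def cover_event_def \<mu>_def T_def not_le)
  then have "prob {\<omega> \<in> space M. \<epsilon> < \<bar>tp_coverage \<gamma> n (\<lambda>i. X i \<omega>) - c\<bar>} \<le>
               prob (length_event m1 \<union> length_event m2 \<union> cover_event m1 \<union> cover_event m2)"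
    by (rule finite_measure_mono) measurable
  also have "\<dots> \<le> prob (length_event m1) + prob (length_event m2) + prob (cover_event m1) + prob (cover_event m2)"
    by (intro order_trans[OF measure_Un_le] add_right_mono) measurable
  also have "\<dots> \<le> real m1 * (2 / p\<^sup>2) / (\<delta> * real n)\<^sup>2 + real m2 * (2 / p\<^sup>2) / (\<delta> * real n)\<^sup>2
      + real m1 * (2 / p\<^sup>2) / (\<epsilon> * real n / 2)\<^sup>2 + real m2 * (2 / p\<^sup>2) / (\<epsilon> * real n / 2)\<^sup>2"
    by (intro add_mono length_prob cover_prob)
  also have "\<dots> = (real m1 + real m2) / (real n * p)\<^sup>2 * (2 / \<delta>\<^sup>2 + 8 / \<epsilon>\<^sup>2)"
    using p n \<delta> \<epsilon> by (simp add: field_simps power2_eq_square)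
  finally show ?thesis .
qed

section \<open>Asymptotics\<close>

lemma log_scaled_tendsto_imp_tendsto_0:
  fixes p :: "nat \<Rightarrow> real"
  assumes "(\<lambda>n. p n * log 2 (real n)) \<longlonglongrightarrow> \<alpha>"
  shows "p \<longlonglongrightarrow> 0"
proof -
  have "(\<lambda>n. p n * log 2 (real n) * (1 / log 2 (real n))) \<longlonglongrightarrow> \<alpha> * 0"
    by (intro tendsto_mult assms) real_asymp
  moreover have "\<forall>\<^sub>F n in sequentially. p n * log 2 (real n) * (1 / log 2 (real n)) = p n"
    using eventually_ge_at_top[of 2] by eventually_elim (simp add: less_imp_neq[symmetric])
  ultimately show ?thesis
    by (simp add: tendsto_cong)
qed

lemma log_scaled_tendsto_imp_mult_at_top:
  fixes p :: "nat \<Rightarrow> real"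
  assumes "(\<lambda>n. p n * log 2 (real n)) \<longlonglongrightarrow> \<alpha>" and "0 < \<alpha>"
  shows "filterlim (\<lambda>n. real n * p n) at_top sequentially"
proof -
  have "filterlim (\<lambda>n. p n * log 2 (real n) * (real n / log 2 (real n))) at_top sequentially"
    by (rule filterlim_tendsto_pos_mult_at_top[OF assms]) real_asymp
  moreover have "\<forall>\<^sub>F n in sequentially. p n * log 2 (real n) * (real n / log 2 (real n)) = real n * p n"
    using eventually_ge_at_top[of 2] by eventually_elim (simp add: less_imp_neq[symmetric])
  ultimately show ?thesis
    by (simp add: filterlim_cong)
qed

lemma one_minus_power_tendsto_exp:
  fixes p :: "nat \<Rightarrow> real" and k :: "nat \<Rightarrow> nat"
  assumes p: "\<And>n. 0 < p n \<and> p n < 1" and "p \<longlonglongrightarrow> 0"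
    and "(\<lambda>n. p n * real (k n)) \<longlonglongrightarrow> \<beta>"
  shows "(\<lambda>n. (1 - p n) ^ k n) \<longlonglongrightarrow> exp (- \<beta>)"
proof -
  have "((\<lambda>x::real. ln (1 - x) / x) \<longlongrightarrow> -1) (at_right 0)"
    by real_asymp
  moreover have "filterlim p (at_right 0) sequentially"
    using \<open>p \<longlonglongrightarrow> 0\<close> p by (intro tendsto_imp_filterlim_at_right) auto
  ultimately have "(\<lambda>n. ln (1 - p n) / p n) \<longlonglongrightarrow> -1"
    by (rule filterlim_compose)
  then have "(\<lambda>n. exp (p n * real (k n) * (ln (1 - p n) / p n))) \<longlonglongrightarrow> exp (\<beta> * -1)"
    by (intro tendsto_exp tendsto_mult assms)
  moreover have "exp (p n * real (k n) * (ln (1 - p n) / p n)) = (1 - p n) ^ k n" for n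
    using p[of n] by (simp add: exp_of_nat_mult)
  ultimately show ?thesis
    by simp
qed

lemma coverage_threshold_mult_tendsto:
  fixes p :: "nat \<Rightarrow> real"
  assumes p: "\<And>n. 0 \<le> p n" and p_lim: "(\<lambda>n. p n * log 2 (real n)) \<longlonglongrightarrow> \<alpha>" and \<gamma>: "0 < \<gamma>"
  shows "(\<lambda>n. p n * real (coverage_threshold \<gamma> n - 1)) \<longlonglongrightarrow> \<alpha> * \<gamma>"
proof (rule tendsto_sandwich)
  have threshold_bounds: "\<gamma> * log 2 (real n) - 1 \<le> real (coverage_threshold \<gamma> n - 1)"
    "real (coverage_threshold \<gamma> n - 1) \<le> \<gamma> * log 2 (real n)" if "2 \<le> n" for n
  proof -
    have "0 < \<gamma> * log 2 (real n)"
      using that \<gamma> by simp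
    then show "\<gamma> * log 2 (real n) - 1 \<le> real (coverage_threshold \<gamma> n - 1)"
      and "real (coverage_threshold \<gamma> n - 1) \<le> \<gamma> * log 2 (real n)"
      unfolding coverage_threshold_def by linarith+
  qed
  show "\<forall>\<^sub>F n in sequentially. \<gamma> * (p n * log 2 (real n)) - p n \<le> p n * real (coverage_threshold \<gamma> n - 1)"
    using eventually_ge_at_top[of 2]
  proof eventually_elim
    case (elim n)
    show ?case
      using mult_left_mono[OF threshold_bounds(1)[OF elim] p[of n]] by (simp add: algebra_simps)
  qed
  show "\<forall>\<^sub>F n in sequentially. p n * real (coverage_threshold \<gamma> n - 1) \<le> \<gamma> * (p n * log 2 (real n))"
    using eventually_ge_at_top[of 2]
  proof eventually_elim
    case (elim n)
    show ?case
      using mult_left_mono[OF threshold_bounds(2)[OF elim] p[of n]] by (simp add: algebra_simps)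
  qed
  show "(\<lambda>n. \<gamma> * (p n * log 2 (real n)) - p n) \<longlonglongrightarrow> \<alpha> * \<gamma>"
    using tendsto_diff[OF tendsto_mult_left[OF p_lim, of \<gamma>] log_scaled_tendsto_imp_tendsto_0[OF p_lim]]
    by (simp add: mult.commute)
  show "(\<lambda>n. \<gamma> * (p n * log 2 (real n))) \<longlonglongrightarrow> \<alpha> * \<gamma>"
    using tendsto_mult_left[OF p_lim, of \<gamma>] by (simp add: mult.commute)
qed

lemma coverage_mean_tendsto:
  fixes p :: "nat \<Rightarrow> real"
  assumes p: "\<And>n. 0 < p n \<and> p n < 1" and p_lim: "(\<lambda>n. p n * log 2 (real n)) \<longlonglongrightarrow> \<alpha>" and \<gamma>: "0 < \<gamma>"
  shows "(\<lambda>n. p n * measure_pmf.expectation (shifted_geometric_pmf (p n)) (above_threshold (coverage_threshold \<gamma> n)))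
           \<longlonglongrightarrow> (\<alpha> * \<gamma> + 1) * exp (- (\<alpha> * \<gamma>))"
proof -
  define t where "t n = coverage_threshold \<gamma> n - 1" for n
  have pt: "(\<lambda>n. p n * real (t n)) \<longlonglongrightarrow> \<alpha> * \<gamma>"
    unfolding t_def by (rule coverage_threshold_mult_tendsto) (use p p_lim \<gamma> in \<open>auto simp: less_imp_le\<close>)
  have "(\<lambda>n. (1 - p n) ^ t n * (p n * real (t n) + 1)) \<longlonglongrightarrow> exp (- (\<alpha> * \<gamma>)) * (\<alpha> * \<gamma> + 1)"
    by (intro tendsto_mult tendsto_add tendsto_const pt
        one_minus_power_tendsto_exp[OF p log_scaled_tendsto_imp_tendsto_0[OF p_lim]])
  moreover have "\<forall>\<^sub>F n in sequentially.
      (1 - p n) ^ t n * (p n * real (t n) + 1)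
      = p n * measure_pmf.expectation (shifted_geometric_pmf (p n)) (above_threshold (coverage_threshold \<gamma> n))"
    using eventually_ge_at_top[of 2]
  proof eventually_elim
    case (elim n)
    then have "coverage_threshold \<gamma> n = Suc (t n)"
      using \<gamma> by (simp add: t_def coverage_threshold_def)
    then show ?case
      using shifted_geometric_above_threshold_expectation(2)[of "p n" "t n"] p[of n]
      by (simp add: field_simps)
  qed
  ultimately show ?thesis
    by (simp add: Lim_transform_eventually mult.commute)
qed

lemma tendsto_div_at_top_if_near:
  fixes x m :: "nat \<Rightarrow> real"
  assumes x: "filterlim x at_top sequentially" and near: "\<forall>\<^sub>F n in sequentially. \<bar>m n - a * x n\<bar> \<le> 1"
  shows "(\<lambda>n. m n / x n) \<longlonglongrightarrow> a"
proof -
  have "(\<lambda>n. m n / x n - a) \<longlonglongrightarrow> 0"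
  proof (rule Lim_null_comparison)
    show "\<forall>\<^sub>F n in sequentially. norm (m n / x n - a) \<le> inverse (x n)"
      using near x[unfolded filterlim_at_top_dense, rule_format, of 0]
    proof eventually_elim
      case (elim n)
      then have "norm (m n / x n - a) = \<bar>m n - a * x n\<bar> / x n"
        by (simp add: field_simps)
      with elim show ?case
        by (simp add: divide_right_mono field_simps)
    qed
    show "(\<lambda>n. inverse (x n)) \<longlonglongrightarrow> 0"
      by (rule tendsto_inverse_0_at_top[OF x])
  qed
  then show ?thesis
    by (rule LIM_zero_cancel)
qed

lemma floor_ceiling_window_tendsto:
  fixes x y :: "nat \<Rightarrow> real"
  assumes x: "filterlim x at_top sequentially" and y: "y \<longlonglongrightarrow> c"
    and \<delta>: "0 \<le> \<delta>" "\<delta> \<le> 1" and e: "\<delta> * c < e"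
  defines "m1 \<equiv> \<lambda>n. nat \<lfloor>(1 - \<delta>) * x n\<rfloor>" and "m2 \<equiv> \<lambda>n. nat \<lceil>(1 + \<delta>) * x n\<rceil>"
  shows "\<forall>\<^sub>F n in sequentially. c - e < real (m1 n) / x n * y n \<and> real (m2 n) / x n * y n < c + e"
    and "(\<lambda>n. (real (m1 n) + real (m2 n)) / (x n)\<^sup>2) \<longlonglongrightarrow> 0"
proof -
  have x_pos: "\<forall>\<^sub>F n in sequentially. 0 < x n"
    using x by (simp add: filterlim_at_top_dense)
  have near: "\<bar>real (m1 n) - (1 - \<delta>) * x n\<bar> \<le> 1" "\<bar>real (m2 n) - (1 + \<delta>) * x n\<bar> \<le> 1"
    if "0 < x n" for n
  proof -
    have "0 \<le> (1 - \<delta>) * x n" "0 \<le> (1 + \<delta>) * x n"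
      using that \<delta> by simp_all
    then show "\<bar>real (m1 n) - (1 - \<delta>) * x n\<bar> \<le> 1" "\<bar>real (m2 n) - (1 + \<delta>) * x n\<bar> \<le> 1"
      using floor_correct[of "(1 - \<delta>) * x n"] ceiling_correct[of "(1 + \<delta>) * x n"]
      unfolding m1_def m2_def by (simp_all add: abs_le_iff) linarith+
  qed
  have m1: "(\<lambda>n. real (m1 n) / x n) \<longlonglongrightarrow> 1 - \<delta>"
    using x_pos by (intro tendsto_div_at_top_if_near[OF x]) (auto elim!: eventually_mono near)
  have m2: "(\<lambda>n. real (m2 n) / x n) \<longlonglongrightarrow> 1 + \<delta>"
    using x_pos by (intro tendsto_div_at_top_if_near[OF x]) (auto elim!: eventually_mono near)
  have m1_lim: "(\<lambda>n. real (m1 n) / x n * y n) \<longlonglongrightarrow> (1 - \<delta>) * c"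
    by (rule tendsto_mult[OF m1 y])
  have m2_lim: "(\<lambda>n. real (m2 n) / x n * y n) \<longlonglongrightarrow> (1 + \<delta>) * c"
    by (rule tendsto_mult[OF m2 y])
  have sum_lim: "(\<lambda>n. (real (m1 n) / x n + real (m2 n) / x n) / x n) \<longlonglongrightarrow> 0"
    by (rule tendsto_divide_0[OF tendsto_add[OF m1 m2] filterlim_at_top_imp_at_infinity[OF x]])
  show "\<forall>\<^sub>F n in sequentially. c - e < real (m1 n) / x n * y n \<and> real (m2 n) / x n * y n < c + e"
    by (intro eventually_conj order_tendstoD(1)[OF m1_lim] order_tendstoD(2)[OF m2_lim])
       (use e in \<open>simp_all add: algebra_simps\<close>)
  show "(\<lambda>n. (real (m1 n) + real (m2 n)) / (x n)\<^sup>2) \<longlonglongrightarrow> 0"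
    using sum_lim by (simp add: power2_eq_square add_divide_distrib)
qed

theorem lemma6:
  fixes p :: "nat \<Rightarrow> real" and \<alpha> \<gamma> \<epsilon> :: real
    and M :: "nat \<Rightarrow> 'a measure" and N :: "nat \<Rightarrow> nat \<Rightarrow> 'a \<Rightarrow> nat"
  assumes p_range: "\<And>n. 0 < p n \<and> p n < 1"
    and p_lim: "(\<lambda>n. p n * log 2 (real n)) \<longlonglongrightarrow> \<alpha>"
    and alpha_pos: "0 < \<alpha>"
    and gamma_pos: "0 < \<gamma>"
    and prob: "\<And>n. prob_space (M n)"
    and indep: "\<And>n. prob_space.indep_vars (M n) (\<lambda>_. count_space UNIV) (N n) UNIV"
    and geom: "\<And>n i. distr (M n) (count_space UNIV) (N n i)
                        = measure_pmf (map_pmf Suc (geometric_pmf (p n)))"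
    and eps_pos: "0 < \<epsilon>"
  shows "(\<lambda>n. measure (M n) {\<omega> \<in> space (M n).
            \<bar>tp_coverage \<gamma> n (\<lambda>i. N n i \<omega>) - (\<alpha> * \<gamma> + 1) * exp (- (\<alpha> * \<gamma>))\<bar> > \<epsilon>})
         \<longlonglongrightarrow> 0"
proof -
  define c where "c = (\<alpha> * \<gamma> + 1) * exp (- (\<alpha> * \<gamma>))"
  define \<delta> where "\<delta> = min (1 / 2) (\<epsilon> / (2 * (c + 1)))"
  have "0 < c"
    using alpha_pos gamma_pos by (simp add: c_def add_pos_pos)
  then have \<delta>: "0 < \<delta>" "\<delta> \<le> 1" "\<delta> * c < \<epsilon> / 2"
    using eps_pos by (auto simp: \<delta>_def min_def field_simps)
  define \<mu> where "\<mu> n = measure_pmf.expectation (shifted_geometric_pmf (p n))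
                           (above_threshold (coverage_threshold \<gamma> n))" for n
  define m1 where "m1 n = nat \<lfloor>(1 - \<delta>) * (real n * p n)\<rfloor>" for n
  define m2 where "m2 n = nat \<lceil>(1 + \<delta>) * (real n * p n)\<rceil>" for n
  have "(\<lambda>n. p n * \<mu> n) \<longlonglongrightarrow> c"
    unfolding \<mu>_def c_def by (rule coverage_mean_tendsto[OF p_range p_lim gamma_pos])
  note window = floor_ceiling_window_tendsto[OF log_scaled_tendsto_imp_mult_at_top[OF p_lim alpha_pos]
      this less_imp_le[OF \<delta>(1)] \<delta>(2,3), folded m1_def m2_def]
  have "\<forall>\<^sub>F n in sequentially. measure (M n) {\<omega> \<in> space (M n). \<epsilon> < \<bar>tp_coverage \<gamma> n (\<lambda>i. N n i \<omega>) - c\<bar>}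
          \<le> (real (m1 n) + real (m2 n)) / (real n * p n)\<^sup>2 * (2 / \<delta>\<^sup>2 + 8 / \<epsilon>\<^sup>2)"
    using window(1) eventually_gt_at_top[of 0]
  proof eventually_elim
    case (elim n)
    have p: "0 < p n" "p n \<le> 1"
      using p_range[of n] by auto
    have "0 \<le> (1 - \<delta>) * (real n * p n)"
      using p \<delta> by simp
    then have m1: "real (m1 n) \<le> (1 - \<delta>) * (real n * p n)"
      by (simp add: m1_def)
    have m2: "(1 + \<delta>) * (real n * p n) \<le> real (m2 n)"
      unfolding m2_def by (rule real_nat_ceiling_ge)
    have "real k / (real n * p n) * (p n * \<mu> n) = real k * \<mu> n / real n" for k
      using elim(2) p by simp
    then have "c - \<epsilon> / 2 \<le> real (m1 n) * \<mu> n / real n" "real (m2 n) * \<mu> n / real n \<le> c + \<epsilon> / 2"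
      using elim(1) by auto
    then show ?case
      unfolding \<mu>_def
      by (rule prob_space.tp_coverage_deviation_prob_le[OF prob indep geom p elim(2) \<delta>(1) eps_pos m1 m2])
  qed
  then show ?thesis
    unfolding c_def[symmetric]
    by (intro tendsto_sandwich[OF _ _ tendsto_const tendsto_mult_left_zero[OF window(2)]]) auto
qed

end
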